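(* Suppose all populations share the same finite strategy set $S\subset[0,1]$, with minimum $s_{\min}$ and maximum $s_{\max}$, and assume $\frac{\lambda d(1-s)}{\gamma}\ge1$ for all $s\in S$ and all $d\in\{1,\dots,D\}$. For $d\in\{1,\dots,D\}$, $\Theta\in[0,1]$ and $s\in[s_{\min},s_{\max}]$ define $$\mathcal{F}^d(s;\Theta)=s\,r-(1-s)\frac{\lambda d(1-s)\Theta}{\gamma+\lambda d(1-s)\Theta}.$$ If $$|r|\ge 1-\frac{1}{\bigl(1+\frac{\lambda d(1-s_{\min})}{\gamma}\bigr)^2}\qquad\text{for all } d\in\{1,\dots,D\},$$ then $s_{\min}$ is a dominant strategy for every population: for all $d$, all $\Theta\in[0,1]$ and all $s\in[s_{\min},s_{\max}]$, $\mathcal{F}^d(s_{\min};\Theta)\ge\mathcal{F}^d(s;\Theta)$.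
   Context: Constants: $\lambda>0$ (contagion rate), $\gamma>0$ (recovery rate), relative reward $r<0$, degrees $d\in\{1,\dots,D\}$. $\mathcal{F}^d(s;\Theta)$ is the (continuous extension of the) payoff of a degree-$d$ player choosing social-inactivity level $s$ when the broadcast link-infection probability is $\Theta$, the perceived infection probability being the steady-state value $\frac{\lambda d(1-s)\Theta}{\gamma+\lambda d(1-s)\Theta}$. *)

theory Defs
  imports Complex_Main
begin

text \<open>Payoff of a degree-d player choosing social-inactivity level s when the
broadcast link-infection probability is Theta (continuous extension, with
steady-state perceived infection probability).\<close>
definition payoff :: "real \<Rightarrow> real \<Rightarrow> real \<Rightarrow> nat \<Rightarrow> real \<Rightarrow> real \<Rightarrow> real" where
  "payoff lam gam r d s Theta =
     s * r - (1 - s) * ((lam * real d * (1 - s) * Theta) / (gam + lam * real d * (1 - s) * Theta))"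

end

theory Submission
  imports Defs
begin

text \<open>Write u = 1 - s for the activity level and k = \<lambda> d \<Theta>. The infection cost
c(u) = u k u / (\<gamma> + k u) has chord slopes 1 - \<gamma>^2 / ((\<gamma> + k X)(\<gamma> + k x)) on [x, X], and
these are bounded by 1 - 1/(1 + \<lambda> d X/\<gamma>)^2 since k \<le> \<lambda> d. So the hypothesis on |r| says
that the reward |r| per unit of inactivity never beats the infection cost saved, and
lowering the inactivity level all the way to s_min can only increase the payoff.\<close>

definition infection_cost :: "real \<Rightarrow> real \<Rightarrow> real \<Rightarrow> real" where
  "infection_cost g k u = u * (k * u / (g + k * u))"

lemma payoff_eq_infection_cost:
  "payoff lam gam r d s Theta = s * r - infection_cost gam (lam * real d * Theta) (1 - s)"
  unfolding payoff_def infection_cost_def by (simp add: algebra_simps)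

lemma infection_cost_diff:
  fixes g k x X :: real
  assumes "g + k * X > 0" and "g + k * x > 0"
  shows "infection_cost g k X - infection_cost g k x
           = (X - x) * (1 - g\<^sup>2 / ((g + k * X) * (g + k * x)))"
  using assms unfolding infection_cost_def
  by (simp add: divide_simps power2_eq_square) algebra

lemma infection_cost_diff_le:
  fixes g k L x X R :: real
  assumes g: "g > 0" and k: "0 \<le> k" "k \<le> L" and x: "0 \<le> x" "x \<le> X"
    and R: "R \<ge> 1 - 1 / (1 + L * X / g)\<^sup>2"
  shows "infection_cost g k X - infection_cost g k x \<le> R * (X - x)"
proof -
  define P where "P = (g + k * X) * (g + k * x)"
  have pos_X: "g + k * X > 0" and pos_x: "g + k * x > 0"
    using g k x by (simp_all add: add_pos_nonneg)
  have "k * X \<le> L * X" and "k * x \<le> L * X"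
    using k x by (auto intro: mult_mono order_trans)
  then have P_le: "P \<le> (g + L * X)\<^sup>2"
    unfolding P_def power2_eq_square using pos_X pos_x by (intro mult_mono) auto
  have "1 / (1 + L * X / g)\<^sup>2 = g\<^sup>2 / (g + L * X)\<^sup>2"
    using g by (simp add: field_simps power2_eq_square)
  also have "\<dots> \<le> g\<^sup>2 / P"
  proof (rule divide_left_mono)
    have "P > 0"
      unfolding P_def using pos_X pos_x by simp
    then show "0 < (g + L * X)\<^sup>2 * P"
      using P_le by (intro mult_pos_pos) linarith+
  qed (use P_le in auto)
  finally have "1 - g\<^sup>2 / P \<le> R"
    using R by linarith
  then have "(X - x) * (1 - g\<^sup>2 / P) \<le> R * (X - x)"
    using x by (metis diff_ge_0_iff_ge mult.commute mult_right_mono)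
  then show ?thesis
    using infection_cost_diff[OF pos_X pos_x] unfolding P_def by simp
qed

theorem theorem5:
  fixes lam gam r :: real and D :: nat and S :: "real set"
  assumes lam_pos: "lam > 0" and gam_pos: "gam > 0" and r_neg: "r < 0"
    and S_fin: "finite S" and S_ne: "S \<noteq> {}" and S_sub: "S \<subseteq> {0..1}"
    and hS: "\<forall>s\<in>S. \<forall>d\<in>{1..D}. lam * real d * (1 - s) / gam \<ge> 1"
    and hr: "\<forall>d\<in>{1..D}. \<bar>r\<bar> \<ge> 1 - 1 / (1 + lam * real d * (1 - Min S) / gam)^2"
  shows "\<forall>d\<in>{1..D}. \<forall>Theta\<in>{0..1}. \<forall>s\<in>{Min S..Max S}.
           payoff lam gam r d (Min S) Theta \<ge> payoff lam gam r d s Theta"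
proof (intro ballI)
  fix d Theta s
  assume d: "d \<in> {1..D}" and Theta: "Theta \<in> {0..(1::real)}" and s: "s \<in> {Min S..Max S}"
  have "0 \<le> Min S" "Max S \<le> 1"
    using S_fin S_ne S_sub Min_in Max_in by fastforce+
  moreover have "0 \<le> lam * real d * Theta" "lam * real d * Theta \<le> lam * real d"
    using lam_pos Theta by (simp_all add: mult_left_le)
  ultimately have "infection_cost gam (lam * real d * Theta) (1 - Min S)
                     - infection_cost gam (lam * real d * Theta) (1 - s)
                   \<le> \<bar>r\<bar> * ((1 - Min S) - (1 - s))"
    using s d hr by (intro infection_cost_diff_le[OF gam_pos]) auto
  then show "payoff lam gam r d (Min S) Theta \<ge> payoff lam gam r d s Theta"
    unfolding payoff_eq_infection_cost using r_neg by (simp add: algebra_simps)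
qed

end
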